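(* Every $(K_4-e)$-design $(X,\mathcal B)$ of order $10$ contains a subdesign of order $6$; that is, there exist a $6$-element subset $Y\subseteq X$ and a subcollection $\mathcal B'\subseteq\mathcal B$ such that $(Y,\mathcal B')$ is a $(K_4-e)$-design of order $6$.
   Context: $K_4-e$ is the graph on four vertices $a,b,c,d$ with edges $ab,ac,ad,bc,bd$; it is denoted $[a,b,c-d]$. A $(K_4-e)$-design of order $v$ is a pair $(X,\mathcal B)$ where $X$ is a set of $v$ vertices and $\mathcal B$ is a collection of copies of $K_4-e$ (called blocks) with vertices in $X$ whose edge sets partition the edge set of the complete graph $K_v$ on $X$. *)

theory Defs
  imports Main
begin

text \<open>Edge set of the graph K4-e denoted [a,b,c-d]: vertices a,b,c,d (distinct),
  edges ab, ac, ad, bc, bd.\<close>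
definition k4e_edges :: "'a \<Rightarrow> 'a \<Rightarrow> 'a \<Rightarrow> 'a \<Rightarrow> 'a set set" where
  "k4e_edges a b c d = {{a,b},{a,c},{a,d},{b,c},{b,d}}"

definition is_k4e_block :: "'a set \<Rightarrow> 'a set set \<Rightarrow> bool" where
  "is_k4e_block X G \<longleftrightarrow> (\<exists>a b c d. a \<in> X \<and> b \<in> X \<and> c \<in> X \<and> d \<in> X \<and>
     distinct [a,b,c,d] \<and> G = k4e_edges a b c d)"

definition complete_edges :: "'a set \<Rightarrow> 'a set set" where
  "complete_edges X = {e. \<exists>x y. x \<in> X \<and> y \<in> X \<and> x \<noteq> y \<and> e = {x,y}}"

definition k4e_design :: "nat \<Rightarrow> 'a set \<Rightarrow> 'a set set set \<Rightarrow> bool" where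
  "k4e_design v X B \<longleftrightarrow> finite X \<and> card X = v \<and>
     (\<forall>G\<in>B. is_k4e_block X G) \<and>
     (\<forall>G1\<in>B. \<forall>G2\<in>B. G1 \<noteq> G2 \<longrightarrow> G1 \<inter> G2 = {}) \<and>
     \<Union>B = complete_edges X"

end

theory Submission
  imports Defs
begin

text \<open>
  In a block [a,b,c-d] the vertices a, b have degree 3 and c, d degree 2. A vertex of a design of
  order 10 has degree 9, so it is a degree-2 vertex of either 0 or 3 blocks; as every block has two
  vertices of each kind, the degree-2 incidences and the degree-3 incidences are equinumerous,
  which forces exactly 4 vertices Z never to be of degree 2. Such a vertex z lies in 3 blocks, and
  the 3 edges from z to the rest of Z lie in distinct blocks in which both endpoints have
  degree 3. Hence the degree-3 pair of every block is either inside Z or disjoint from it, and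
  the blocks missing Z form a design on the remaining 6 vertices.
\<close>

definition deg :: "'a set set \<Rightarrow> 'a \<Rightarrow> nat" where
  "deg G v = card {e \<in> G. v \<in> e}"

definition blocks_of_deg :: "'a set set set \<Rightarrow> nat \<Rightarrow> 'a \<Rightarrow> 'a set set set" where
  "blocks_of_deg B k v = {G \<in> B. deg G v = k}"

lemma deg_k4e_edges:
  assumes "distinct [a,b,c,d]"
  shows "deg (k4e_edges a b c d) v =
    (if v = a \<or> v = b then 3 else if v = c \<or> v = d then 2 else 0)"
proof -
  consider "v = a" | "v = b" | "v = c" | "v = d" | "v \<notin> {a,b,c,d}" by blast
  then show ?thesis
  proof cases
    case 1
    then have "{e \<in> k4e_edges a b c d. v \<in> e} = {{a,b},{a,c},{a,d}}"
      using assms by (auto simp: k4e_edges_def)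
    then show ?thesis using assms 1 by (auto simp: deg_def doubleton_eq_iff)
  next
    case 2
    then have "{e \<in> k4e_edges a b c d. v \<in> e} = {{a,b},{b,c},{b,d}}"
      using assms by (auto simp: k4e_edges_def)
    then show ?thesis using assms 2 by (auto simp: deg_def doubleton_eq_iff)
  next
    case 3
    then have "{e \<in> k4e_edges a b c d. v \<in> e} = {{a,c},{b,c}}"
      using assms by (auto simp: k4e_edges_def)
    then show ?thesis using assms 3 by (auto simp: deg_def doubleton_eq_iff)
  next
    case 4
    then have "{e \<in> k4e_edges a b c d. v \<in> e} = {{a,d},{b,d}}"
      using assms by (auto simp: k4e_edges_def)
    then show ?thesis using assms 4 by (auto simp: deg_def doubleton_eq_iff)
  next
    case 5
    then have no_edges: "{e \<in> k4e_edges a b c d. v \<in> e} = {}"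
      using assms by (auto simp: k4e_edges_def)
    show ?thesis using assms 5 by (simp add: deg_def no_edges)
  qed
qed

lemma sum_card_filter_swap:
  assumes "finite A" "finite B"
  shows "(\<Sum>x\<in>A. card {y \<in> B. R x y}) = (\<Sum>y\<in>B. card {x \<in> A. R x y})"
proof -
  have "(\<Sum>x\<in>A. card {y \<in> B. R x y}) = (\<Sum>x\<in>A. \<Sum>y\<in>B. if R x y then 1 else 0)"
    using assms by (simp add: sum.inter_filter[symmetric])
  also have "\<dots> = (\<Sum>y\<in>B. \<Sum>x\<in>A. if R x y then 1 else 0)"
    by (rule sum.swap)
  also have "\<dots> = (\<Sum>y\<in>B. card {x \<in> A. R x y})"
    using assms by (simp add: sum.inter_filter[symmetric])
  finally show ?thesis .
qed

lemma is_k4e_blockE: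
  assumes "is_k4e_block X G"
  obtains a b c d where "a \<in> X" "b \<in> X" "c \<in> X" "d \<in> X" "distinct [a,b,c,d]"
    "G = k4e_edges a b c d"
  using assms unfolding is_k4e_block_def by blast

lemma k4e_block_finite: "is_k4e_block X G \<Longrightarrow> finite G"
  by (elim is_k4e_blockE) (simp add: k4e_edges_def)

lemma k4e_block_vertices_subset: "is_k4e_block X G \<Longrightarrow> \<Union>G \<subseteq> X"
  by (elim is_k4e_blockE) (auto simp: k4e_edges_def)

lemma k4e_block_deg_cases:
  "is_k4e_block X G \<Longrightarrow> deg G v = 0 \<or> deg G v = 2 \<or> deg G v = 3"
  by (elim is_k4e_blockE) (simp add: deg_k4e_edges)

lemma k4e_block_vertex_deg:
  assumes "is_k4e_block X G" "v \<in> \<Union>G"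
  shows "deg G v = 2 \<or> deg G v = 3"
proof -
  have "deg G v \<noteq> 0"
    using assms k4e_block_finite[OF assms(1)] by (auto simp: deg_def card_0_eq)
  then show ?thesis using k4e_block_deg_cases[OF assms(1), of v] by linarith
qed

lemma k4e_block_card_deg:
  assumes "is_k4e_block X G" "k = 2 \<or> k = 3"
  shows "card {v \<in> X. deg G v = k} = 2"
  using assms(1)
proof (rule is_k4e_blockE)
  fix a b c d
  assume abcd: "a \<in> X" "b \<in> X" "c \<in> X" "d \<in> X" "distinct [a,b,c,d]" "G = k4e_edges a b c d"
  then have "{v \<in> X. deg G v = k} = (if k = 3 then {a,b} else {c,d})"
    using assms(2) by (auto simp: deg_k4e_edges)
  then show ?thesis using abcd by simp
qed

lemma k4e_block_deg3_unique:
  assumes "is_k4e_block X G" "deg G u = 3" "deg G v = 3" "deg G w = 3" "u \<noteq> v" "u \<noteq> w"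
  shows "v = w"
  using assms(1) by (rule is_k4e_blockE) (use assms in \<open>auto simp: deg_k4e_edges split: if_splits\<close>)

lemma k4e_block_edge_meets_deg3:
  assumes "is_k4e_block X G" "{x,y} \<in> G"
  shows "deg G x = 3 \<or> deg G y = 3"
  using assms(1)
proof (rule is_k4e_blockE)
  fix a b c d
  assume abcd: "distinct [a,b,c,d]" "G = k4e_edges a b c d"
  then have "x \<in> {a,b} \<or> y \<in> {a,b}"
    using assms(2) by (auto simp: k4e_edges_def doubleton_eq_iff)
  then show ?thesis using abcd by (auto simp: deg_k4e_edges)
qed

context
  fixes n :: nat and X :: "'a set" and B :: "'a set set set"
  assumes design: "k4e_design n X B"
begin

lemma k4e_design_finite: "finite X"
  using design by (simp add: k4e_design_def)

lemma k4e_design_block: "G \<in> B \<Longrightarrow> is_k4e_block X G"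
  using design by (simp add: k4e_design_def)

lemma k4e_design_edges: "\<Union>B = complete_edges X"
  using design by (simp add: k4e_design_def)

lemma k4e_design_finite_blocks: "finite B"
proof -
  have "finite (complete_edges X)"
    by (rule finite_subset[of _ "Pow X"]) (auto simp: complete_edges_def k4e_design_finite)
  moreover have "B \<subseteq> Pow (complete_edges X)"
    using k4e_design_edges by auto
  ultimately show ?thesis
    by (simp add: finite_subset)
qed

lemma k4e_design_edge_block:
  assumes "x \<in> X" "y \<in> X" "x \<noteq> y"
  obtains G where "G \<in> B" "{x,y} \<in> G"
  using assms k4e_design_edges by (auto simp: complete_edges_def)

lemma k4e_design_block_unique: "G1 \<in> B \<Longrightarrow> G2 \<in> B \<Longrightarrow> e \<in> G1 \<Longrightarrow> e \<in> G2 \<Longrightarrow> G1 = G2"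
  using design by (auto simp: k4e_design_def)

lemma k4e_design_sum_deg:
  assumes "x \<in> X"
  shows "(\<Sum>G\<in>B. deg G x) = n - 1"
proof -
  have "{e \<in> complete_edges X. x \<in> e} = (\<lambda>y. {x,y}) ` (X - {x})"
    using assms by (auto simp: complete_edges_def)
  moreover have "inj_on (\<lambda>y. {x,y}) (X - {x})"
    by (auto simp: inj_on_def doubleton_eq_iff)
  ultimately have "card {e \<in> complete_edges X. x \<in> e} = n - 1"
    using assms design by (simp add: card_image k4e_design_def)
  moreover have "{e \<in> complete_edges X. x \<in> e} = (\<Union>G\<in>B. {e \<in> G. x \<in> e})"
    using k4e_design_edges by blast
  moreover have "card (\<Union>G\<in>B. {e \<in> G. x \<in> e}) = (\<Sum>G\<in>B. card {e \<in> G. x \<in> e})"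
    using k4e_design_finite_blocks k4e_block_finite[OF k4e_design_block] k4e_design_block_unique
    by (intro card_UN_disjoint) auto
  ultimately show ?thesis by (simp add: deg_def)
qed

lemma k4e_design_deg_equation:
  assumes "x \<in> X"
  shows "3 * card (blocks_of_deg B 3 x) + 2 * card (blocks_of_deg B 2 x) = n - 1"
proof -
  have "(\<Sum>G\<in>B. deg G x) =
      (\<Sum>G\<in>B. (if deg G x = 3 then 3 else 0) + (if deg G x = 2 then 2 else 0))"
    using k4e_block_deg_cases[OF k4e_design_block] by (intro sum.cong) auto
  also have "\<dots> = 3 * card (blocks_of_deg B 3 x) + 2 * card (blocks_of_deg B 2 x)"
    using k4e_design_finite_blocks
    by (simp add: sum.distrib sum.inter_filter[symmetric] blocks_of_deg_def)
  finally show ?thesis using k4e_design_sum_deg[OF assms] by simp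
qed

lemma k4e_design_sum_card_blocks_of_deg:
  assumes "k = 2 \<or> k = 3"
  shows "(\<Sum>x\<in>X. card (blocks_of_deg B k x)) = 2 * card B"
  unfolding blocks_of_deg_def
  using k4e_design_finite k4e_design_finite_blocks
    k4e_block_card_deg[OF k4e_design_block assms]
  by (simp add: sum_card_filter_swap)

lemma k4e_design_deg_eq_3_if_no_deg_2:
  assumes "G \<in> B" "v \<in> \<Union>G" "blocks_of_deg B 2 v = {}"
  shows "deg G v = 3"
  using k4e_block_vertex_deg[OF k4e_design_block[OF assms(1)] assms(2)] assms(1,3)
  by (auto simp: blocks_of_deg_def)

text \<open>
  The edges from z to the other vertices of Z lie in distinct blocks through z (a block has only two
  vertices of degree 3); there are as many of them as blocks through z, so every block through z
  arises this way.
\<close>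
lemma k4e_design_pure_apex_closed:
  assumes Z: "Z \<subseteq> X" "3 * card Z = n + 2" "\<And>z. z \<in> Z \<Longrightarrow> blocks_of_deg B 2 z = {}"
    and G: "G \<in> B" "z \<in> Z" "deg G z = 3" "deg G w = 3" "w \<noteq> z"
  shows "w \<in> Z"
proof -
  have zX: "z \<in> X" using G Z by blast
  define block_of where "block_of v = (SOME H. H \<in> B \<and> {z,v} \<in> H)" for v
  have block_of: "block_of v \<in> B \<and> {z,v} \<in> block_of v" if "v \<in> Z - {z}" for v
  proof -
    have "v \<in> X" "z \<noteq> v" using that Z(1) by auto
    then obtain H where "H \<in> B" "{z,v} \<in> H" using zX k4e_design_edge_block by metis
    then show ?thesis unfolding block_of_def by (metis (mono_tags, lifting) someI)
  qed
  have deg3: "deg (block_of v) z = 3 \<and> deg (block_of v) v = 3" if "v \<in> Z - {z}" for v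
    using block_of[OF that] k4e_design_deg_eq_3_if_no_deg_2 Z(3) that G(2) by blast
  have inj: "inj_on block_of (Z - {z})"
  proof (rule inj_onI)
    fix v v' assume v: "v \<in> Z - {z}" and v': "v' \<in> Z - {z}" and eq: "block_of v = block_of v'"
    show "v = v'"
      using k4e_block_deg3_unique[OF k4e_design_block, of "block_of v" z v v']
        block_of[OF v] deg3[OF v] deg3[OF v'] v v' eq by auto
  qed
  have "card (blocks_of_deg B 3 z) = card (Z - {z})"
    using k4e_design_deg_equation[OF zX] Z(3)[OF G(2)] Z(2) G(2) by simp
  moreover have "block_of ` (Z - {z}) \<subseteq> blocks_of_deg B 3 z"
    using block_of deg3 by (auto simp: blocks_of_deg_def)
  moreover have "finite (blocks_of_deg B 3 z)"
    using k4e_design_finite_blocks by (simp add: blocks_of_deg_def)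
  ultimately have "block_of ` (Z - {z}) = blocks_of_deg B 3 z"
    using card_subset_eq card_image[OF inj] by metis
  then obtain v where v: "v \<in> Z - {z}" "G = block_of v"
    using G by (auto simp: blocks_of_deg_def)
  then have "w = v"
    using deg3[OF v(1)] G k4e_block_deg3_unique[OF k4e_design_block[OF G(1)]] by auto
  then show ?thesis using v by simp
qed

lemma k4e_design_pure_apex_complement_closed:
  assumes Z: "Z \<subseteq> X" "3 * card Z = n + 2" "\<And>z. z \<in> Z \<Longrightarrow> blocks_of_deg B 2 z = {}"
    and G: "G \<in> B" "x \<in> X - Z" "y \<in> X - Z" "{x,y} \<in> G"
  shows "\<Union>G \<subseteq> X - Z"
proof
  fix v assume v: "v \<in> \<Union>G"
  have block: "is_k4e_block X G" using G(1) by (rule k4e_design_block)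
  have "v \<notin> Z"
  proof
    assume "v \<in> Z"
    then have "deg G v = 3"
      using k4e_design_deg_eq_3_if_no_deg_2[OF G(1) v] Z(3) by blast
    moreover obtain u where "u \<in> {x,y}" "deg G u = 3"
      using k4e_block_edge_meets_deg3[OF block G(4)] by blast
    ultimately show False
      using k4e_design_pure_apex_closed[OF Z G(1) \<open>v \<in> Z\<close>] \<open>v \<in> Z\<close> G by auto
  qed
  then show "v \<in> X - Z" using k4e_block_vertices_subset[OF block] v by blast
qed

lemma k4e_subdesign:
  assumes "Y \<subseteq> X" and closed: "\<And>G x y. G \<in> B \<Longrightarrow> x \<in> Y \<Longrightarrow> y \<in> Y \<Longrightarrow> {x,y} \<in> G \<Longrightarrow> \<Union>G \<subseteq> Y"
  shows "k4e_design (card Y) Y {G \<in> B. \<Union>G \<subseteq> Y}"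
  unfolding k4e_design_def
proof (intro conjI ballI impI)
  show "finite Y" using assms(1) k4e_design_finite by (rule finite_subset)
next
  fix G assume G: "G \<in> {G \<in> B. \<Union>G \<subseteq> Y}"
  then obtain a b c d where abcd: "distinct [a,b,c,d]" "G = k4e_edges a b c d"
    by (auto elim: is_k4e_blockE[OF k4e_design_block])
  then have "{a,b,c,d} \<subseteq> Y" using G by (auto simp: k4e_edges_def)
  then show "is_k4e_block Y G" using abcd unfolding is_k4e_block_def by blast
next
  fix G1 G2 assume "G1 \<in> {G \<in> B. \<Union>G \<subseteq> Y}" "G2 \<in> {G \<in> B. \<Union>G \<subseteq> Y}" "G1 \<noteq> G2"
  then show "G1 \<inter> G2 = {}" using k4e_design_block_unique by blast
next
  show "\<Union>{G \<in> B. \<Union>G \<subseteq> Y} = complete_edges Y"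
  proof
    show "\<Union>{G \<in> B. \<Union>G \<subseteq> Y} \<subseteq> complete_edges Y"
    proof
      fix e assume "e \<in> \<Union>{G \<in> B. \<Union>G \<subseteq> Y}"
      then obtain G where G: "G \<in> B" "\<Union>G \<subseteq> Y" "e \<in> G" by blast
      have "e \<in> complete_edges X" using G k4e_design_edges by blast
      then obtain x y where "x \<noteq> y" "e = {x,y}"
        by (auto simp: complete_edges_def)
      then show "e \<in> complete_edges Y" using G by (auto simp: complete_edges_def)
    qed
    show "complete_edges Y \<subseteq> \<Union>{G \<in> B. \<Union>G \<subseteq> Y}"
    proof
      fix e assume "e \<in> complete_edges Y"
      then obtain x y where xy: "x \<in> Y" "y \<in> Y" "x \<noteq> y" "e = {x,y}"
        by (auto simp: complete_edges_def)
      then obtain G where "G \<in> B" "{x,y} \<in> G"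
        using assms(1) by (meson k4e_design_edge_block subsetD)
      then show "e \<in> \<Union>{G \<in> B. \<Union>G \<subseteq> Y}" using closed xy by blast
    qed
  qed
qed simp

end

lemma k4e_design_10_feet:
  assumes "k4e_design 10 X B"
  shows "card {x \<in> X. blocks_of_deg B 2 x = {}} = 4"
proof -
  let ?Q = "\<lambda>x. card (blocks_of_deg B 2 x)"
  have fin: "finite X" "finite B"
    using assms by (auto intro: k4e_design_finite k4e_design_finite_blocks)
  have Q_cases: "?Q x = 0 \<or> ?Q x = 3" if "x \<in> X" for x
    using k4e_design_deg_equation[OF assms that] by presburger
  have "3 * (\<Sum>x\<in>X. card (blocks_of_deg B 3 x)) + 2 * (\<Sum>x\<in>X. ?Q x) = (\<Sum>x\<in>X. 9)"
    using k4e_design_deg_equation[OF assms]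
    by (simp add: sum_distrib_left sum.distrib[symmetric])
  then have sum_Q: "(\<Sum>x\<in>X. ?Q x) = 18"
    using assms by (simp add: k4e_design_sum_card_blocks_of_deg k4e_design_def)
  have "(\<Sum>x\<in>X. ?Q x) = (\<Sum>x\<in>X. if ?Q x = 3 then 3 else 0)"
    using Q_cases by (intro sum.cong) auto
  also have "\<dots> = 3 * card {x \<in> X. ?Q x = 3}"
    using fin(1) by (simp add: sum.inter_filter[symmetric])
  finally have "card {x \<in> X. ?Q x = 3} = 6"
    using sum_Q by simp
  moreover have "blocks_of_deg B 2 x = {} \<longleftrightarrow> ?Q x = 0" for x
    using fin(2) by (simp add: blocks_of_deg_def)
  then have "{x \<in> X. blocks_of_deg B 2 x = {}} = X - {x \<in> X. ?Q x = 3}"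
    using Q_cases by auto
  ultimately show ?thesis
    using assms fin(1) by (simp add: card_Diff_subset k4e_design_def)
qed

theorem lemma2p2:
  fixes X :: "'a set" and B :: "'a set set set"
  assumes "k4e_design 10 X B"
  shows "\<exists>Y B'. Y \<subseteq> X \<and> card Y = 6 \<and> B' \<subseteq> B \<and> k4e_design 6 Y B'"
proof -
  define Z where "Z = {x \<in> X. blocks_of_deg B 2 x = {}}"
  have Z: "Z \<subseteq> X" "3 * card Z = 10 + 2" "\<And>z. z \<in> Z \<Longrightarrow> blocks_of_deg B 2 z = {}"
    using k4e_design_10_feet[OF assms] by (auto simp: Z_def)
  have card_Y: "card (X - Z) = 6"
    using assms Z(1,2) by (simp add: card_Diff_subset k4e_design_def finite_subset)
  have "k4e_design (card (X - Z)) (X - Z) {G \<in> B. \<Union>G \<subseteq> X - Z}"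
    using k4e_design_pure_apex_complement_closed[OF assms Z]
    by (intro k4e_subdesign[OF assms]) blast+
  then show ?thesis
    using card_Y by (intro exI[of _ "X - Z"] exI[of _ "{G \<in> B. \<Union>G \<subseteq> X - Z}"]) auto
qed

end
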